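(* Let $G$ be a maximal $3$-$\gamma_{c}$-vertex critical graph, let $I$ be a maximum independent set of $G$, and let $W$ be a vertex set inducing a maximum complete subgraph of $G$ such that $|I\cap W|$ is minimum. For every $w\in W$ and every minimum connected dominating set $D_{w}$ of $G-w$, we have $|D_{w}\cap W|=0$ and $|D_{w}\cap I|\leq 1$.
   Context: All graphs are finite, simple and connected. A set $D\subseteq V(G)$ is a connected dominating set of $G$ if every vertex of $G$ is in $D$ or adjacent to a vertex of $D$, and $G[D]$ is connected; $\gamma_{c}(G)$ is the minimum cardinality of such a set. $G$ is $k$-$\gamma_{c}$-edge critical if $\gamma_{c}(G)=k$ and $\gamma_{c}(G+uv)<k$ for every pair of non-adjacent vertices $u,v$. A $2$-connected graph $G$ is $k$-$\gamma_{c}$-vertex critical if $\gamma_{c}(G)=k$ and $\gamma_{c}(G-v)<k$ for every $v\in V(G)$. $G$ is maximal $k$-$\gamma_{c}$-vertex critical if it is both $k$-$\gamma_{c}$-edge critical and $k$-$\gamma_{c}$-vertex critical. *)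

theory Defs
  imports Main
begin

definition graph :: "'a set \<Rightarrow> ('a \<Rightarrow> 'a \<Rightarrow> bool) \<Rightarrow> bool" where
  "graph V E \<longleftrightarrow> finite V \<and> (\<forall>x y. E x y \<longrightarrow> x \<in> V \<and> y \<in> V)
     \<and> (\<forall>x y. E x y \<longrightarrow> E y x) \<and> (\<forall>x. \<not> E x x)"

definition connected_set :: "('a \<Rightarrow> 'a \<Rightarrow> bool) \<Rightarrow> 'a set \<Rightarrow> bool" where
  "connected_set E S \<longleftrightarrow> S \<noteq> {} \<and>
     (\<forall>x\<in>S. \<forall>y\<in>S. (\<lambda>a b. E a b \<and> a \<in> S \<and> b \<in> S)\<^sup>*\<^sup>* x y)"

definition connected_graph :: "'a set \<Rightarrow> ('a \<Rightarrow> 'a \<Rightarrow> bool) \<Rightarrow> bool" where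
  "connected_graph V E \<longleftrightarrow> graph V E \<and> connected_set E V"

definition del_vertex :: "('a \<Rightarrow> 'a \<Rightarrow> bool) \<Rightarrow> 'a \<Rightarrow> ('a \<Rightarrow> 'a \<Rightarrow> bool)" where
  "del_vertex E v = (\<lambda>x y. E x y \<and> x \<noteq> v \<and> y \<noteq> v)"

definition add_edge :: "('a \<Rightarrow> 'a \<Rightarrow> bool) \<Rightarrow> 'a \<Rightarrow> 'a \<Rightarrow> ('a \<Rightarrow> 'a \<Rightarrow> bool)" where
  "add_edge E u v = (\<lambda>x y. E x y \<or> (x = u \<and> y = v) \<or> (x = v \<and> y = u))"

definition two_connected :: "'a set \<Rightarrow> ('a \<Rightarrow> 'a \<Rightarrow> bool) \<Rightarrow> bool" where
  "two_connected V E \<longleftrightarrow> connected_graph V E \<and> card V \<ge> 3 \<and>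
     (\<forall>v\<in>V. connected_graph (V - {v}) (del_vertex E v))"

definition dominating :: "'a set \<Rightarrow> ('a \<Rightarrow> 'a \<Rightarrow> bool) \<Rightarrow> 'a set \<Rightarrow> bool" where
  "dominating V E D \<longleftrightarrow> D \<subseteq> V \<and> (\<forall>x\<in>V. x \<in> D \<or> (\<exists>d\<in>D. E x d))"

definition cds :: "'a set \<Rightarrow> ('a \<Rightarrow> 'a \<Rightarrow> bool) \<Rightarrow> 'a set \<Rightarrow> bool" where
  "cds V E D \<longleftrightarrow> dominating V E D \<and> connected_set E D"

definition gamma_c :: "'a set \<Rightarrow> ('a \<Rightarrow> 'a \<Rightarrow> bool) \<Rightarrow> nat" where
  "gamma_c V E = Min {card D | D. cds V E D}"

definition min_cds :: "'a set \<Rightarrow> ('a \<Rightarrow> 'a \<Rightarrow> bool) \<Rightarrow> 'a set \<Rightarrow> bool" where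
  "min_cds V E D \<longleftrightarrow> cds V E D \<and> card D = gamma_c V E"

definition edge_critical :: "nat \<Rightarrow> 'a set \<Rightarrow> ('a \<Rightarrow> 'a \<Rightarrow> bool) \<Rightarrow> bool" where
  "edge_critical k V E \<longleftrightarrow> connected_graph V E \<and> gamma_c V E = k \<and>
     (\<forall>u\<in>V. \<forall>v\<in>V. u \<noteq> v \<and> \<not> E u v \<longrightarrow> gamma_c V (add_edge E u v) < k)"

definition vertex_critical :: "nat \<Rightarrow> 'a set \<Rightarrow> ('a \<Rightarrow> 'a \<Rightarrow> bool) \<Rightarrow> bool" where
  "vertex_critical k V E \<longleftrightarrow> two_connected V E \<and> gamma_c V E = k \<and>
     (\<forall>v\<in>V. gamma_c (V - {v}) (del_vertex E v) < k)"

definition maximal_vertex_critical :: "nat \<Rightarrow> 'a set \<Rightarrow> ('a \<Rightarrow> 'a \<Rightarrow> bool) \<Rightarrow> bool" where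
  "maximal_vertex_critical k V E \<longleftrightarrow> edge_critical k V E \<and> vertex_critical k V E"

definition independent :: "'a set \<Rightarrow> ('a \<Rightarrow> 'a \<Rightarrow> bool) \<Rightarrow> 'a set \<Rightarrow> bool" where
  "independent V E I \<longleftrightarrow> I \<subseteq> V \<and> (\<forall>x\<in>I. \<forall>y\<in>I. \<not> E x y)"

definition max_independent :: "'a set \<Rightarrow> ('a \<Rightarrow> 'a \<Rightarrow> bool) \<Rightarrow> 'a set \<Rightarrow> bool" where
  "max_independent V E I \<longleftrightarrow> independent V E I \<and>
     (\<forall>J. independent V E J \<longrightarrow> card J \<le> card I)"

definition clique :: "'a set \<Rightarrow> ('a \<Rightarrow> 'a \<Rightarrow> bool) \<Rightarrow> 'a set \<Rightarrow> bool" where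
  "clique V E W \<longleftrightarrow> W \<subseteq> V \<and> (\<forall>x\<in>W. \<forall>y\<in>W. x \<noteq> y \<longrightarrow> E x y)"

definition max_clique :: "'a set \<Rightarrow> ('a \<Rightarrow> 'a \<Rightarrow> bool) \<Rightarrow> 'a set \<Rightarrow> bool" where
  "max_clique V E W \<longleftrightarrow> clique V E W \<and> (\<forall>X. clique V E X \<longrightarrow> card X \<le> card W)"

end

theory Submission
  imports Defs
begin

text \<open>A minimum connected dominating set \<open>D\<close> of \<open>G - w\<close> has fewer than three vertices by
vertex criticality. If \<open>D\<close> contained a vertex of \<open>W\<close>, that vertex would be adjacent to \<open>w\<close>,
so \<open>D\<close> would already be a connected dominating set of \<open>G\<close>, contradicting \<open>\<gamma>\<^sub>c(G) = 3\<close>.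
If \<open>D\<close> contained two vertices of \<open>I\<close>, it would consist of exactly these two non-adjacent
vertices and could not be connected.\<close>

lemma connected_set_mono:
  assumes "connected_set E' S" and "\<And>x y. E' x y \<Longrightarrow> E x y"
  shows "connected_set E S"
proof -
  have "(\<lambda>a b. E' a b \<and> a \<in> S \<and> b \<in> S) \<le> (\<lambda>a b. E a b \<and> a \<in> S \<and> b \<in> S)"
    using assms(2) by auto
  then show ?thesis
    using assms(1) unfolding connected_set_def by (meson rtranclp_mono predicate2D)
qed

lemma connected_set_without_edges_eq:
  assumes "connected_set E S" and "\<forall>x\<in>S. \<forall>y\<in>S. \<not> E x y" and "x \<in> S" "y \<in> S"
  shows "x = y"
proof -
  have "(\<lambda>a b. E a b \<and> a \<in> S \<and> b \<in> S)\<^sup>*\<^sup>* x y"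
    using assms(1,3,4) unfolding connected_set_def by blast
  then show ?thesis
    by (cases rule: converse_rtranclpE) (use assms(2) in blast)+
qed

lemma connected_set_card_le_2_inter_independent:
  assumes "connected_set E D" "finite D" "card D \<le> 2" "\<forall>x\<in>I. \<forall>y\<in>I. \<not> E x y"
  shows "card (D \<inter> I) \<le> 1"
proof -
  have "x = y" if x: "x \<in> D \<inter> I" and y: "y \<in> D \<inter> I" for x y
  proof (rule ccontr)
    assume "x \<noteq> y"
    then have "card {x, y} = 2" by simp
    moreover have "{x, y} \<subseteq> D" using x y by blast
    ultimately have "card D = 2"
      using assms(2,3) card_mono[of D "{x, y}"] by simp
    then have "D = {x, y}"
      using card_subset_eq[OF assms(2) \<open>{x, y} \<subseteq> D\<close>] \<open>card {x, y} = 2\<close> by simp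
    then have "\<forall>a\<in>D. \<forall>b\<in>D. \<not> E a b" using x y assms(4) by auto
    then show False
      using connected_set_without_edges_eq[OF assms(1)] x y \<open>x \<noteq> y\<close> by blast
  qed
  then show ?thesis using assms(2) by (simp add: card_le_Suc0_iff_eq)
qed

lemma gamma_c_le_card:
  assumes "finite V" and "cds V E D"
  shows "gamma_c V E \<le> card D"
proof -
  have "{card D | D. cds V E D} \<subseteq> {0..card V}"
    using assms(1) by (auto simp: cds_def dominating_def card_mono)
  then have "finite {card D | D. cds V E D}" by (rule finite_subset) simp
  then show ?thesis unfolding gamma_c_def using assms(2) by (intro Min_le) auto
qed

lemma cds_del_vertex_with_neighbour:
  assumes "cds (V - {w}) (del_vertex E w) D" and "a \<in> D" and "E w a"
  shows "cds V E D"
proof -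
  have sub: "del_vertex E w x y \<Longrightarrow> E x y" for x y by (simp add: del_vertex_def)
  have "dominating V E D"
    using assms sub unfolding cds_def dominating_def by blast
  moreover have "connected_set E D"
    using assms(1) connected_set_mono sub unfolding cds_def by blast
  ultimately show ?thesis by (simp add: cds_def)
qed

lemma vertex_critical_finite:
  assumes "vertex_critical k V E"
  shows "finite V"
proof -
  have "graph V E"
    using assms by (simp add: vertex_critical_def two_connected_def connected_graph_def)
  then show ?thesis by (simp add: graph_def)
qed

lemma vertex_critical_min_cds_del_vertex:
  assumes "vertex_critical k V E" and "w \<in> V"
    and "min_cds (V - {w}) (del_vertex E w) D"
  shows "card D < k" and "\<forall>a\<in>D. \<not> E w a"
proof -
  have gamma: "gamma_c V E = k" and gamma_del: "gamma_c (V - {w}) (del_vertex E w) < k"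
    using assms(1,2) unfolding vertex_critical_def by blast+
  have cds_del: "cds (V - {w}) (del_vertex E w) D"
    and card_D: "card D = gamma_c (V - {w}) (del_vertex E w)"
    using assms(3) unfolding min_cds_def by blast+
  show "card D < k" using gamma_del card_D by simp
  show "\<forall>a\<in>D. \<not> E w a"
  proof (intro ballI notI)
    fix a assume "a \<in> D" "E w a"
    then have "cds V E D" by (rule cds_del_vertex_with_neighbour[OF cds_del])
    then have "gamma_c V E \<le> card D"
      by (rule gamma_c_le_card[OF vertex_critical_finite[OF assms(1)]])
    then show False using gamma_del card_D gamma by simp
  qed
qed

theorem lemma3p4:
  fixes V :: "'a set" and E :: "'a \<Rightarrow> 'a \<Rightarrow> bool" and I W :: "'a set"
  assumes "maximal_vertex_critical 3 V E"
    and "max_independent V E I"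
    and "max_clique V E W"
    and "\<forall>X. max_clique V E X \<longrightarrow> card (I \<inter> W) \<le> card (I \<inter> X)"
  shows "\<forall>w\<in>W. \<forall>D. min_cds (V - {w}) (del_vertex E w) D \<longrightarrow>
           card (D \<inter> W) = 0 \<and> card (D \<inter> I) \<le> 1"
proof (intro ballI allI impI)
  fix w D
  assume wW: "w \<in> W" and D: "min_cds (V - {w}) (del_vertex E w) D"
  have crit: "vertex_critical 3 V E"
    using assms(1) by (simp add: maximal_vertex_critical_def)
  have W: "clique V E W" and I: "independent V E I"
    using assms(2,3) by (simp_all add: max_clique_def max_independent_def)
  have wV: "w \<in> V" using W wW unfolding clique_def by blast
  note D_small = vertex_critical_min_cds_del_vertex[OF crit wV D]
  have DV: "D \<subseteq> V - {w}"
    using D unfolding min_cds_def cds_def dominating_def by blast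
  then have "finite D"
    by (rule finite_subset) (simp add: vertex_critical_finite[OF crit])
  have "D \<inter> W = {}"
  proof (intro equals0I)
    fix a assume "a \<in> D \<inter> W"
    then have "a \<in> D" "a \<in> W" by simp_all
    then have "a \<noteq> w" using DV by auto
    then have "E w a" using W wW \<open>a \<in> W\<close> by (simp add: clique_def)
    then show False using D_small(2) \<open>a \<in> D\<close> by simp
  qed
  moreover have "card (D \<inter> I) \<le> 1"
  proof (rule connected_set_card_le_2_inter_independent)
    show "connected_set (del_vertex E w) D" using D by (simp add: min_cds_def cds_def)
    show "\<forall>x\<in>I. \<forall>y\<in>I. \<not> del_vertex E w x y"
      using I by (simp add: independent_def del_vertex_def)
  qed (use \<open>finite D\<close> D_small(1) in simp_all)
  ultimately show "card (D \<inter> W) = 0 \<and> card (D \<inter> I) \<le> 1" by simp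
qed

end
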